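(* Let $d\ge0$ be fixed, let $n\ge3$ and $t\ge2$ satisfy $3\ln\big((d+1)e^2\big)\ln t\le \ln n$, and let $G_n\sim G(n,d/n)$. Then the probability that there exist an integer $k\in[2,t]$ and a $k$-vertex subgraph of $G_n$ with at least $k+\frac{k}{\ln k}$ edges is at most $\frac{15}{n}$; that is, $$\Pr\Big[\sum_{k=2}^{t}\ \sum_{j\ge k+k/\ln k} s_k(G_n,j)>0\Big]\le \frac{15}{n}.$$
   Context: $G(n,p)$ is the random graph on $[n]$ with each edge present independently with probability $p$ (the hypotheses imply $d/n\le1$). For a graph $G$, $k\ge1$ and $j\ge0$, $s_k(G,j)$ is the number of unlabeled (isomorphism classes of) subgraphs of $G$ with exactly $k$ vertices and $j$ edges. *)

theory Defs
  imports Complex_Main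
begin

definition all_edges :: "nat \<Rightarrow> nat set set" where
  "all_edges n = {e. \<exists>u v. u < n \<and> v < n \<and> u \<noteq> v \<and> e = {u, v}}"

text \<open>Probability that the random graph G(n,p) (each of the possible edges present
  independently with probability p) has property P; a graph is identified with its edge set.\<close>
definition gnp_prob :: "nat \<Rightarrow> real \<Rightarrow> (nat set set \<Rightarrow> bool) \<Rightarrow> real" where
  "gnp_prob n p P =
     (\<Sum>E \<in> {E. E \<subseteq> all_edges n \<and> P E}.
        p ^ card E * (1 - p) ^ (card (all_edges n) - card E))"

text \<open>The graph with edge set E on [n] has a subgraph with exactly k vertices and j edges
  (equivalently s_k(G,j) > 0).\<close>
definition has_subgraph :: "nat \<Rightarrow> nat set set \<Rightarrow> nat \<Rightarrow> nat \<Rightarrow> bool" where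
  "has_subgraph n E k j \<longleftrightarrow>
     (\<exists>S F. S \<subseteq> {..<n} \<and> card S = k \<and> F \<subseteq> E \<and> (\<forall>e\<in>F. e \<subseteq> S) \<and> card F = j)"

end

theory Submission
  imports Defs "HOL-Analysis.Complex_Transcendental"
begin

text \<open>By the union bound, the probability that some k-vertex subgraph has at least J edges is at
  most the expected number of pairs (k-set S, J-set of edges inside S), i.e.
  C(n,k) C(C(k,2),J) p^J.  Bounding binomials by powers over factorials and factorials via
  x^N/N! \<le> e^x, this is at most ((d+1)e^2)^J (k/n)^(J-k).  The hypothesis on n makes
  ln n large compared with ln k, and J - k \<ge> k / ln k makes the excess J - k large, so the
  term is at most n^(-5(J-k)/18) \<le> 60/(n k (k-1)) for k \<ge> 5; for k \<le> 4 the threshold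
  exceeds C(k,2), so those terms vanish.  Summing the telescoping series over k \<ge> 5 gives 15/n.\<close>

lemma finite_all_edges: "finite (all_edges n)"
proof (rule finite_subset)
  show "all_edges n \<subseteq> Pow {..<n}" unfolding all_edges_def by auto
qed simp

lemma sum_Pow_binomial_weights:
  fixes p :: real
  assumes "finite B"
  shows "(\<Sum>G\<in>Pow B. p ^ card G * (1 - p) ^ (card B - card G)) = 1"
proof -
  have "(\<Prod>x\<in>B. p + (1 - p)) = (\<Sum>X\<in>Pow B. (\<Prod>x\<in>X. p) * (\<Prod>x\<in>B-X. 1 - p))"
    by (rule prod_add[OF assms])
  also have "\<dots> = (\<Sum>G\<in>Pow B. p ^ card G * (1 - p) ^ (card B - card G))"
    by (rule sum.cong) (auto simp: card_Diff_subset finite_subset[OF _ assms])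
  finally show ?thesis by simp
qed

lemma sum_supersets_binomial_weights:
  fixes p :: real
  assumes "finite A" "F \<subseteq> A"
  shows "(\<Sum>E\<in>{E. E \<subseteq> A \<and> F \<subseteq> E}. p ^ card E * (1 - p) ^ (card A - card E)) = p ^ card F"
proof -
  have fin_F: "finite F" using assms finite_subset by blast
  have inj: "inj_on ((\<union>) F) (Pow (A - F))" by (auto simp: inj_on_def)
  have img: "(\<union>) F ` Pow (A - F) = {E. E \<subseteq> A \<and> F \<subseteq> E}"
  proof (intro equalityI subsetI)
    fix E assume "E \<in> {E. E \<subseteq> A \<and> F \<subseteq> E}"
    hence "E = F \<union> (E - F)" "E - F \<in> Pow (A - F)" by auto
    thus "E \<in> (\<union>) F ` Pow (A - F)" by blast
  qed (use assms in auto)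
  have weight: "p ^ card (F \<union> G) * (1 - p) ^ (card A - card (F \<union> G))
      = p ^ card F * (p ^ card G * (1 - p) ^ (card (A - F) - card G))" if "G \<in> Pow (A - F)" for G
  proof -
    have "finite G" using that assms(1) finite_subset by blast
    hence card_Un: "card (F \<union> G) = card F + card G"
      using that fin_F by (subst card_Un_disjoint) auto
    have "card F \<le> card A" using assms card_mono by blast
    moreover have "card (A - F) = card A - card F" using assms by (simp add: card_Diff_subset fin_F)
    ultimately have "card A - card (F \<union> G) = card (A - F) - card G" using card_Un by simp
    thus ?thesis using card_Un by (simp add: power_add)
  qed
  have "(\<Sum>E\<in>{E. E \<subseteq> A \<and> F \<subseteq> E}. p ^ card E * (1 - p) ^ (card A - card E))
      = (\<Sum>G\<in>Pow (A - F). p ^ card F * (p ^ card G * (1 - p) ^ (card (A - F) - card G)))"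
    by (simp add: img[symmetric] sum.reindex[OF inj] weight)
  also have "\<dots> = p ^ card F"
    using sum_Pow_binomial_weights[of "A - F" p] assms by (simp flip: sum_distrib_left)
  finally show ?thesis .
qed

lemma gnp_prob_superset:
  assumes "F \<subseteq> all_edges n"
  shows "gnp_prob n p (\<lambda>E. F \<subseteq> E) = p ^ card F"
  unfolding gnp_prob_def using sum_supersets_binomial_weights[OF finite_all_edges assms] by simp

lemma gnp_prob_mono:
  assumes "0 \<le> p" "p \<le> 1" "\<And>E. E \<subseteq> all_edges n \<Longrightarrow> P E \<Longrightarrow> Q E"
  shows "gnp_prob n p P \<le> gnp_prob n p Q"
  unfolding gnp_prob_def
proof (rule sum_mono2)
  show "finite {E. E \<subseteq> all_edges n \<and> Q E}" using finite_all_edges by auto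
qed (use assms in auto)

lemma gnp_prob_Bex_le:
  assumes "0 \<le> p" "p \<le> 1" "finite I"
  shows "gnp_prob n p (\<lambda>E. \<exists>i\<in>I. Q i E) \<le> (\<Sum>i\<in>I. gnp_prob n p (Q i))"
  using assms(3)
proof (induction I rule: finite_induct)
  case empty
  then show ?case by (simp add: gnp_prob_def)
next
  case (insert x I)
  let ?w = "\<lambda>E. p ^ card E * (1 - p) ^ (card (all_edges n) - card E)"
  let ?ev = "\<lambda>P. {E. E \<subseteq> all_edges n \<and> P E}"
  have fin: "finite (?ev P)" for P using finite_all_edges by auto
  have "?ev (\<lambda>E. \<exists>i\<in>insert x I. Q i E) = ?ev (Q x) \<union> ?ev (\<lambda>E. \<exists>i\<in>I. Q i E)" by auto
  hence "gnp_prob n p (\<lambda>E. \<exists>i\<in>insert x I. Q i E) = sum ?w (?ev (Q x) \<union> ?ev (\<lambda>E. \<exists>i\<in>I. Q i E))"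
    unfolding gnp_prob_def by simp
  also have "\<dots> \<le> gnp_prob n p (Q x) + gnp_prob n p (\<lambda>E. \<exists>i\<in>I. Q i E)"
    unfolding gnp_prob_def using assms(1,2) by (subst sum_Un[OF fin fin]) (simp add: sum_nonneg)
  also have "\<dots> \<le> (\<Sum>i\<in>insert x I. gnp_prob n p (Q i))"
    using insert by simp
  finally show ?case .
qed

lemma card_all_edges_within:
  assumes "S \<subseteq> {..<n}"
  shows "card {e \<in> all_edges n. e \<subseteq> S} = card S choose 2"
proof -
  have "{e \<in> all_edges n. e \<subseteq> S} = {e. e \<subseteq> S \<and> card e = 2}"
    using assms unfolding all_edges_def by (auto simp: card_2_iff)
  thus ?thesis using assms by (simp add: n_subsets finite_subset)
qed

definition subgraph_copies :: "nat \<Rightarrow> nat \<Rightarrow> nat \<Rightarrow> (nat set \<times> nat set set) set" where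
  "subgraph_copies n k J = {(S, F). S \<subseteq> {..<n} \<and> card S = k \<and> F \<subseteq> all_edges n
                                  \<and> (\<forall>e\<in>F. e \<subseteq> S) \<and> card F = J}"

lemma card_subgraph_copies: "card (subgraph_copies n k J) = (n choose k) * ((k choose 2) choose J)"
proof -
  let ?Ss = "{S. S \<subseteq> {..<n} \<and> card S = k}"
  let ?Fs = "\<lambda>S. {F. F \<subseteq> {e \<in> all_edges n. e \<subseteq> S} \<and> card F = J}"
  have "subgraph_copies n k J = Sigma ?Ss ?Fs" unfolding subgraph_copies_def by auto
  moreover have "card (?Fs S) = (k choose 2) choose J" if "S \<in> ?Ss" for S
    using that finite_all_edges by (simp add: n_subsets card_all_edges_within)
  ultimately show ?thesis
    using finite_all_edges by (simp add: card_SigmaI n_subsets)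
qed

lemma has_subgraph_imp_subgraph_copy:
  assumes "has_subgraph n E k j" "J \<le> j" "E \<subseteq> all_edges n"
  shows "\<exists>c\<in>subgraph_copies n k J. snd c \<subseteq> E"
proof -
  obtain S F where SF: "S \<subseteq> {..<n}" "card S = k" "F \<subseteq> E" "\<forall>e\<in>F. e \<subseteq> S" "card F = j"
    using assms(1) unfolding has_subgraph_def by blast
  obtain F' where "F' \<subseteq> F" "card F' = J"
    using obtain_subset_with_card_n assms(2) SF(5) by metis
  hence "(S, F') \<in> subgraph_copies n k J" "snd (S, F') \<subseteq> E"
    unfolding subgraph_copies_def using SF assms(3) by auto
  thus ?thesis by blast
qed

lemma gnp_prob_has_subgraph_le:
  assumes "0 \<le> p" "p \<le> 1"
  shows "gnp_prob n p (\<lambda>E. \<exists>j\<ge>J. has_subgraph n E k j)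
           \<le> real (n choose k) * real ((k choose 2) choose J) * p ^ J"
proof -
  have "gnp_prob n p (\<lambda>E. \<exists>j\<ge>J. has_subgraph n E k j)
      \<le> gnp_prob n p (\<lambda>E. \<exists>c\<in>subgraph_copies n k J. snd c \<subseteq> E)"
  proof (rule gnp_prob_mono[OF assms])
    fix E assume "E \<subseteq> all_edges n" "\<exists>j\<ge>J. has_subgraph n E k j"
    then obtain j where "J \<le> j" "has_subgraph n E k j" by blast
    thus "\<exists>c\<in>subgraph_copies n k J. snd c \<subseteq> E"
      using has_subgraph_imp_subgraph_copy \<open>E \<subseteq> all_edges n\<close> by blast
  qed
  also have "\<dots> \<le> (\<Sum>c\<in>subgraph_copies n k J. gnp_prob n p (\<lambda>E. snd c \<subseteq> E))"
  proof (rule gnp_prob_Bex_le[OF assms])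
    have "subgraph_copies n k J \<subseteq> Pow {..<n} \<times> Pow (all_edges n)"
      unfolding subgraph_copies_def by auto
    thus "finite (subgraph_copies n k J)" by (rule finite_subset) (simp add: finite_all_edges)
  qed
  also have "\<dots> = (\<Sum>c\<in>subgraph_copies n k J. p ^ J)"
    by (intro sum.cong refl) (auto simp: subgraph_copies_def gnp_prob_superset)
  also have "\<dots> = real (n choose k) * real ((k choose 2) choose J) * p ^ J"
    by (simp add: card_subgraph_copies)
  finally show ?thesis .
qed

lemma exp_partial_sum_le:
  fixes x :: real
  assumes "0 \<le> x"
  shows "(\<Sum>i<N. x ^ i / fact i) \<le> exp x"
proof -
  have exp_sums: "(\<lambda>i. x ^ i / fact i) sums exp x"
    using exp_converges[of x] by (simp add: divide_inverse mult.commute)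
  have "(\<Sum>i<N. x ^ i / fact i) \<le> (\<Sum>i. x ^ i / fact i)"
    by (rule sum_le_suminf[OF sums_summable[OF exp_sums]]) (use assms in auto)
  thus ?thesis using exp_sums by (simp add: sums_iff)
qed

lemma power_div_fact_le_exp:
  fixes x :: real
  assumes "0 \<le> x"
  shows "x ^ N / fact N \<le> exp x"
proof -
  have "x ^ N / fact N \<le> (\<Sum>i<Suc N. x ^ i / fact i)"
    using assms by (simp add: sum_nonneg)
  also have "\<dots> \<le> exp x" by (rule exp_partial_sum_le[OF assms])
  finally show ?thesis .
qed

lemma ln_less_of_less_exp_partial_sum:
  fixes x y :: real
  assumes "0 < x" "0 \<le> y" "x < (\<Sum>i<N. y ^ i / fact i)"
  shows "ln x < y"
proof -
  have "x < exp y" using assms exp_partial_sum_le[of y N] by linarith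
  thus ?thesis using assms(1) by (metis ln_exp ln_less_cancel_iff exp_gt_zero)
qed

lemma ln_less_div_of_le:
  fixes a c x :: real
  assumes "0 < c" "c \<le> a" "a \<le> x" "ln a < a / c"
  shows "ln x < x / c"
proof -
  have "ln (x / a) \<le> x / a - 1" using assms by (intro ln_le_minus_one) auto
  hence "ln x \<le> ln a + x / a - 1" using assms by (simp add: ln_div)
  moreover have "x / a - 1 = (x - a) / a" using assms by (simp add: field_simps)
  moreover have "(x - a) / a \<le> (x - a) / c" using assms by (intro divide_left_mono) auto
  ultimately show ?thesis using assms(4) by (simp add: diff_divide_distrib)
qed

lemma ln_less_third:
  fixes x :: real
  assumes "5 \<le> x"
  shows "ln x < x / 3"
proof (rule ln_less_div_of_le[OF _ _ assms])
  show "ln 5 < (5::real) / 3"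
    by (rule ln_less_of_less_exp_partial_sum[where N = 5])
       (simp_all add: lessThan_nat_numeral fact_numeral power_divide)
qed simp_all

lemma ln_less_quarter:
  fixes x :: real
  assumes "9 \<le> x"
  shows "ln x < x / 4"
proof (rule ln_less_div_of_le[OF _ _ assms])
  show "ln 9 < (9::real) / 4"
    by (rule ln_less_of_less_exp_partial_sum[where N = 7])
       (simp_all add: lessThan_nat_numeral fact_numeral power_divide)
qed simp_all

lemma ln_four_less_two: "ln 4 < (2::real)"
  by (rule ln_less_of_less_exp_partial_sum[where N = 3])
     (simp_all add: lessThan_nat_numeral fact_numeral)

lemma three_halves_le_ln_five: "3 / 2 \<le> ln (5::real)"
proof -
  have "exp (3 / 2 :: real) ^ 2 = exp 1 ^ 3" by (simp flip: exp_of_nat_mult)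
  also have "\<dots> \<le> (272 / 100) ^ 3" using e_less_272 by (intro power_mono) auto
  also have "\<dots> \<le> 5 ^ 2" by (simp add: power_divide)
  finally have "exp (3 / 2 :: real) \<le> 5" by (rule power2_le_imp_le) simp
  thus ?thesis using ln_le_cancel_iff[of "exp (3 / 2)" 5] by simp
qed

lemma choose_le_power_div_fact: "real (N choose k) \<le> real N ^ k / fact k"
proof -
  have "real ((N choose k) * fact k) \<le> real (N ^ k)"
    by (simp only: of_nat_le_iff binomial_fact_pow)
  thus ?thesis by (simp add: field_simps)
qed

lemma choose_two_le: "real (k choose 2) \<le> real k ^ 2 / 2"
  using choose_le_power_div_fact[of k 2] by (simp add: numeral_eq_Suc)

lemma first_moment_term_le:
  fixes d :: real and n k J :: nat
  assumes "0 \<le> d" "0 < n" "k \<le> J"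
  shows "real (n choose k) * real ((k choose 2) choose J) * (d / real n) ^ J
           \<le> ((d + 1) * exp 2) ^ J * (real k / real n) ^ (J - k)"
proof -
  define m where "m = J - k"
  have J: "J = k + m" unfolding m_def using assms(3) by simp
  have "real ((k choose 2) choose J) \<le> real (k choose 2) ^ J / fact J"
    by (rule choose_le_power_div_fact)
  also have "\<dots> \<le> (real k ^ 2 / 2) ^ J / fact J"
    by (intro divide_right_mono power_mono choose_two_le) auto
  finally have "real (n choose k) * real ((k choose 2) choose J) * (d / real n) ^ J
      \<le> real n ^ k / fact k * ((real k ^ 2 / 2) ^ J / fact J) * (d / real n) ^ J"
    using choose_le_power_div_fact[of n k] assms(1) by (intro mult_mono) auto
  also have "\<dots> = (real k ^ k / fact k) * (real k ^ J / fact J) * ((d / 2) ^ J * (real k / real n) ^ m)"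
  proof -
    have "(real k ^ 2) ^ J = real k ^ (2 * J)" by (simp add: power_mult)
    also have "2 * J = k + J + m" using J by simp
    finally have "(real k ^ 2) ^ J = real k ^ k * real k ^ J * real k ^ m" by (simp add: power_add)
    moreover have "real n ^ J = real n ^ k * real n ^ m" by (simp add: J power_add)
    ultimately show ?thesis using assms(2) by (simp add: power_divide field_simps)
  qed
  also have "\<dots> \<le> exp (real J) * exp (real J) * ((d / 2) ^ J * (real k / real n) ^ m)"
  proof (intro mult_right_mono mult_mono)
    have "real k ^ k / fact k \<le> exp (real k)" by (rule power_div_fact_le_exp) simp
    also have "\<dots> \<le> exp (real J)" using assms(3) by simp
    finally show "real k ^ k / fact k \<le> exp (real J)" .
    have "real k ^ J / fact J \<le> real J ^ J / fact J"
      using assms(3) by (intro divide_right_mono power_mono) auto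
    also have "\<dots> \<le> exp (real J)" by (rule power_div_fact_le_exp) simp
    finally show "real k ^ J / fact J \<le> exp (real J)" .
  qed (use assms(1) in auto)
  also have "\<dots> = (exp 2 * (d / 2)) ^ J * (real k / real n) ^ m"
  proof -
    have "exp (real J) * exp (real J) = exp 2 ^ J"
      by (simp add: mult_exp_exp flip: exp_of_nat_mult)
    thus ?thesis by (simp only: power_mult_distrib mult.assoc)
  qed
  also have "\<dots> \<le> ((d + 1) * exp 2) ^ J * (real k / real n) ^ m"
    using assms(1) by (intro mult_right_mono power_mono) auto
  finally show ?thesis unfolding m_def .
qed

lemma first_moment_exponent_le:
  fixes a lam L :: real and k m :: nat
  assumes "2 \<le> a" "3 / 2 \<le> lam" "real k \<le> real m * lam" "3 * a * lam \<le> L"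
  shows "real (k + m) * a + real m * lam - real m * L \<le> - (5 / 18) * real m * L"
proof -
  have "real k * a \<le> real m * lam * a" using assms(1,3) by (intro mult_right_mono) auto
  hence "real (k + m) * a + real m * lam - real m * L \<le> real m * (lam * a + a + lam - L)"
    by (simp add: algebra_simps)
  also have "\<dots> \<le> real m * (- (5 / 18) * L)"
  proof (rule mult_left_mono)
    \<comment> \<open>a \<le> (2/3) a lam and lam \<le> a lam / 2, so the bracket is at most (13/6) a lam - L\<close>
    have "a * (lam - 3 / 2) \<ge> 0" "lam * (a - 2) \<ge> 0" using assms(1,2) by simp_all
    thus "lam * a + a + lam - L \<le> - (5 / 18) * L" using assms(4) by (simp add: algebra_simps)
  qed simp
  finally show ?thesis by simp
qed

lemma exp_decay_le:
  fixes n k m :: nat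
  assumes "1 \<le> n" "5 \<le> k" "6 * ln (real k) \<le> ln (real n)" "4 \<le> m" "9 \<le> k \<Longrightarrow> 5 \<le> m"
  shows "exp (- (5 / 18) * real m * ln (real n)) \<le> 60 / (real n * real k * (real k - 1))"
proof -
  define L where "L = ln (real n)"
  have L: "0 \<le> L" "exp L = real n" unfolding L_def using assms(1) by simp_all
  have k: "0 < real k * (real k - 1)" using assms(2) by simp
  show ?thesis
  proof (cases "k \<le> 8")
    case True
    have "4 * L \<le> real m * L" using assms(4) L by (intro mult_right_mono) auto
    hence "exp (- (5 / 18) * real m * L) \<le> exp (- L)" using L by simp
    also have "\<dots> = 1 / real n" using L by (simp add: exp_minus inverse_eq_divide)
    also have "\<dots> \<le> 60 / (real n * (real k * (real k - 1)))"
    proof -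
      have "real k * (real k - 1) \<le> 8 * 7" using True assms(2) by (intro mult_mono) auto
      hence "1 \<le> 60 / (real k * (real k - 1))" using k by simp
      hence "1 / real n \<le> 60 / (real k * (real k - 1)) / real n" by (intro divide_right_mono) auto
      thus ?thesis by (simp add: mult.commute)
    qed
    finally show ?thesis by (simp add: L_def mult.assoc)
  next
    case False
    have "5 * L \<le> real m * L" using assms(5) False L by (intro mult_right_mono) auto
    moreover have "0 \<le> ln (real k)" using assms(2) by simp
    ultimately have "- (5 / 18) * real m * L \<le> - L - 2 * ln (real k)"
      using assms(3) unfolding L_def by linarith
    hence "exp (- (5 / 18) * real m * L) \<le> exp (- L - 2 * ln (real k))" by simp
    also have "\<dots> = 1 / (real n * real k ^ 2)"
    proof -
      have "exp (2 * ln (real k)) = real k ^ 2"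
        using exp_of_nat_mult[of 2 "ln (real k)"] assms(2) by simp
      thus ?thesis using L by (simp add: exp_diff exp_minus inverse_eq_divide)
    qed
    also have "\<dots> \<le> 60 / (real n * real k * (real k - 1))"
    proof (rule frac_le)
      show "0 < real n * real k * (real k - 1)" using k assms(1) by (simp add: mult.assoc)
      have "real n * real k * (real k - 1) \<le> real n * real k * real k" by (intro mult_left_mono) auto
      thus "real n * real k * (real k - 1) \<le> real n * real k ^ 2"
        by (simp add: power2_eq_square mult.assoc)
    qed simp_all
    finally show ?thesis by (simp add: L_def)
  qed
qed

lemma dense_subgraph_term_le:
  fixes d :: real and n k J :: nat
  assumes "0 \<le> d" "1 \<le> n" "5 \<le> k"
    and "3 * ln ((d + 1) * exp 2) * ln (real k) \<le> ln (real n)"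
    and "real k + real k / ln (real k) \<le> real J"
  shows "real (n choose k) * real ((k choose 2) choose J) * (d / real n) ^ J
           \<le> 60 / (real n * real k * (real k - 1))"
proof -
  define a where "a = ln ((d + 1) * exp 2)"
  define lam where "lam = ln (real k)"
  define L where "L = ln (real n)"
  have a: "2 \<le> a" unfolding a_def using assms(1) by (simp add: ln_mult)
  have "ln 5 \<le> lam" unfolding lam_def using assms(3) by simp
  hence lam: "3 / 2 \<le> lam" using three_halves_le_ln_five by linarith
  have excess: "real k / lam \<le> real J - real k" using assms(5) unfolding lam_def by simp
  have "3 < real k / lam"
    using ln_less_third[of "real k"] assms(3) lam unfolding lam_def by (simp add: field_simps)
  hence "k + 4 \<le> J" using excess by linarith
  define m where "m = J - k"
  have J: "J = k + m" and m: "4 \<le> m" using \<open>k + 4 \<le> J\<close> unfolding m_def by simp_all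
  have m5: "5 \<le> m" if "9 \<le> k"
  proof -
    have "4 < real k / lam"
      using ln_less_quarter[of "real k"] that lam unfolding lam_def by (simp add: field_simps)
    thus ?thesis using excess J by linarith
  qed
  have "real k \<le> real m * lam" using excess J lam by (simp add: field_simps)
  hence decay: "real (k + m) * a + real m * lam - real m * L \<le> - (5 / 18) * real m * L"
    using first_moment_exponent_le a lam assms(4) unfolding a_def lam_def L_def by blast
  have "6 * lam \<le> L"
    using mult_right_mono[OF a, of "3 * lam"] lam assms(4) unfolding a_def lam_def L_def by linarith
  have "real (n choose k) * real ((k choose 2) choose J) * (d / real n) ^ J
      \<le> ((d + 1) * exp 2) ^ J * (real k / real n) ^ m"
    using first_moment_term_le[of d n k J] assms(1,2) J by simp
  also have "\<dots> = exp (real (k + m) * a + real m * lam - real m * L)"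
  proof -
    have "exp (real (k + m) * a) = ((d + 1) * exp 2) ^ J"
      unfolding a_def J exp_of_nat_mult using assms(1) by (simp add: add_pos_nonneg)
    moreover have "exp (real m * lam) = real k ^ m" "exp (real m * L) = real n ^ m"
      unfolding lam_def L_def exp_of_nat_mult using assms(2,3) by simp_all
    ultimately show ?thesis by (simp add: exp_add exp_diff power_divide)
  qed
  also have "\<dots> \<le> exp (- (5 / 18) * real m * L)" using decay by simp
  also have "\<dots> \<le> 60 / (real n * real k * (real k - 1))"
    using exp_decay_le assms(2,3) \<open>6 * lam \<le> L\<close> m m5 unfolding lam_def L_def by blast
  finally show ?thesis .
qed

lemma choose_two_less_dense_threshold:
  fixes k J :: nat
  assumes "2 \<le> k" "k \<le> 4" "real k + real k / ln (real k) \<le> real J"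
  shows "k choose 2 < J"
proof -
  have "0 < real k / ln (real k)" using assms(1) by simp
  hence "real k < real J" using assms(3) by linarith
  consider "k = 2" | "k = 3" | "k = 4" using assms(1,2) by linarith
  thus ?thesis
  proof cases
    case 3
    have "2 < 4 / ln (4::real)" using ln_four_less_two by (simp add: field_simps)
    hence "6 < J" using assms(3) 3 by simp
    thus ?thesis using 3 by (simp add: choose_two)
  qed (use \<open>real k < real J\<close> in \<open>simp_all add: choose_two\<close>)
qed

lemma sum_inverse_consecutive_products_le:
  assumes "1 \<le> m"
  shows "(\<Sum>k\<in>{Suc m..N}. 1 / (real k * (real k - 1))) \<le> 1 / real m"
proof (cases "m \<le> N")
  case True
  have "(\<Sum>k\<in>{Suc m..N}. 1 / (real k * (real k - 1)))
      = (\<Sum>k\<in>{Suc m..N}. (- 1 / real k) - (- 1 / real (k - 1)))"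
    using assms by (intro sum.cong) (auto simp: of_nat_diff field_simps)
  also have "\<dots> = 1 / real m - 1 / real N"
    using sum_telescope''[OF True, of "\<lambda>k. - 1 / real k"] by simp
  finally show ?thesis by simp
qed simp

lemma edge_probability_le_one:
  fixes d t :: real
  assumes "0 \<le> d" "1 \<le> n" "2 \<le> t" "3 * ln ((d + 1) * exp 2) * ln t \<le> ln (real n)"
  shows "d \<le> real n"
proof -
  have "1 \<le> ln (8 :: real)" using exp_le by (simp add: ln_ge_iff)
  also have "\<dots> = 3 * ln (2 :: real)" using ln_realpow[of 2 3] by simp
  also have "\<dots> \<le> 3 * ln t" using assms(3) by simp
  finally have "1 \<le> 3 * ln t" .
  moreover have "0 \<le> ln ((d + 1) * exp 2)" using assms(1) by (simp add: ln_mult)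
  ultimately have "ln ((d + 1) * exp 2) * 1 \<le> ln ((d + 1) * exp 2) * (3 * ln t)"
    by (rule mult_left_mono)
  hence "ln ((d + 1) * exp 2) \<le> ln (real n)" using assms(4) by (simp add: mult.assoc)
  hence "ln (d + 1) \<le> ln (real n)" using assms(1) by (simp add: ln_mult)
  thus ?thesis using assms(1,2) by simp
qed

lemma gnp_prob_dense_subgraph_le:
  fixes d t :: real and n k :: nat
  assumes "0 \<le> d" "1 \<le> n" "2 \<le> t" "3 * ln ((d + 1) * exp 2) * ln t \<le> ln (real n)"
    and "2 \<le> k" "real k \<le> t"
  shows "gnp_prob n (d / real n)
           (\<lambda>E. \<exists>j. real j \<ge> real k + real k / ln (real k) \<and> has_subgraph n E k j)
         \<le> (if k < 5 then 0 else 60 / (real n * real k * (real k - 1)))"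
proof -
  define p where "p = d / real n"
  define J where "J = nat \<lceil>real k + real k / ln (real k)\<rceil>"
  have p: "0 \<le> p" "p \<le> 1"
    using edge_probability_le_one assms(1-4) unfolding p_def by auto
  have J: "real k + real k / ln (real k) \<le> real J" unfolding J_def by linarith
  have "3 * ln ((d + 1) * exp 2) * ln (real k) \<le> 3 * ln ((d + 1) * exp 2) * ln t"
    using assms(1,5,6) by (intro mult_left_mono) (simp_all add: ln_mult)
  hence hyp_k: "3 * ln ((d + 1) * exp 2) * ln (real k) \<le> ln (real n)" using assms(4) by linarith
  have "gnp_prob n p (\<lambda>E. \<exists>j. real j \<ge> real k + real k / ln (real k) \<and> has_subgraph n E k j)
      \<le> gnp_prob n p (\<lambda>E. \<exists>j\<ge>J. has_subgraph n E k j)"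
    unfolding J_def by (intro gnp_prob_mono[OF p]) auto
  also have "\<dots> \<le> real (n choose k) * real ((k choose 2) choose J) * p ^ J"
    by (rule gnp_prob_has_subgraph_le[OF p])
  also have "\<dots> \<le> (if k < 5 then 0 else 60 / (real n * real k * (real k - 1)))"
  proof (cases "k < 5")
    case True
    hence "k choose 2 < J" using choose_two_less_dense_threshold[OF assms(5) _ J] by simp
    thus ?thesis using True by (simp add: binomial_eq_0)
  next
    case False
    thus ?thesis using dense_subgraph_term_le[OF assms(1,2) _ hyp_k J] unfolding p_def by simp
  qed
  finally show ?thesis unfolding p_def .
qed

theorem mainTheorem10:
  fixes d t :: real and n :: nat
  assumes "d \<ge> 0" and "n \<ge> 3" and "t \<ge> 2"
    and "3 * ln ((d + 1) * exp 2) * ln t \<le> ln (real n)"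
  shows "gnp_prob n (d / real n)
           (\<lambda>E. \<exists>k j. 2 \<le> k \<and> real k \<le> t \<and> real j \<ge> real k + real k / ln (real k)
                   \<and> has_subgraph n E k j)
         \<le> 15 / real n"
proof -
  define M where "M = nat \<lfloor>t\<rfloor>"
  have K: "2 \<le> k \<and> real k \<le> t \<longleftrightarrow> k \<in> {2..M}" for k
    unfolding M_def using assms(3) by (auto simp: le_nat_floor le_nat_iff le_floor_iff)
  have p: "0 \<le> d / real n" "d / real n \<le> 1"
    using edge_probability_le_one assms by auto
  have "(\<lambda>E. \<exists>k j. 2 \<le> k \<and> real k \<le> t \<and> real j \<ge> real k + real k / ln (real k)
                  \<and> has_subgraph n E k j)
      = (\<lambda>E. \<exists>k\<in>{2..M}. \<exists>j. real j \<ge> real k + real k / ln (real k) \<and> has_subgraph n E k j)"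
    using K by (intro ext) blast
  hence "gnp_prob n (d / real n)
          (\<lambda>E. \<exists>k j. 2 \<le> k \<and> real k \<le> t \<and> real j \<ge> real k + real k / ln (real k)
                  \<and> has_subgraph n E k j)
      \<le> (\<Sum>k\<in>{2..M}. gnp_prob n (d / real n)
            (\<lambda>E. \<exists>j. real j \<ge> real k + real k / ln (real k) \<and> has_subgraph n E k j))"
    using gnp_prob_Bex_le[OF p finite_atLeastAtMost] by simp
  also have "\<dots> \<le> (\<Sum>k\<in>{2..M}. if k < 5 then 0 else 60 / (real n * real k * (real k - 1)))"
    using assms(2) K by (intro sum_mono gnp_prob_dense_subgraph_le[OF assms(1) _ assms(3,4)]) auto
  also have "\<dots> = (60 / real n) * (\<Sum>k\<in>{Suc 4..M}. 1 / (real k * (real k - 1)))"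
  proof -
    have "{2..M} \<inter> - {k. k < 5} = {Suc 4..M}" by auto
    thus ?thesis by (simp add: sum.If_cases sum_distrib_left mult.assoc)
  qed
  also have "\<dots> \<le> (60 / real n) * (1 / real 4)"
    using sum_inverse_consecutive_products_le[of 4 M] by (intro mult_left_mono) auto
  finally show ?thesis by simp
qed

end
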